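(* Let $\mathbf{L}=\langle L,\leq,0,1\rangle$ be a totally ordered complete lattice (regarded as a Gödel algebra), let $\varphi$ be a formula of a first-order language $\mathcal{J}$ and let $\mathbf{M}$ be a finite $\mathbf{L}$-structure for $\mathcal{J}$. Let $f\colon L\to L$ be an order embedding with $f(0)=0$ and $f(1)=1$. Then $\mathcal{D}_{\mathbf{M},\varphi}\circ f=\mathcal{D}_{\mathbf{M}\circ f,\varphi}$, where $\mathbf{M}\circ f$ is the $\mathbf{L}$-structure with the same universe as $\mathbf{M}$ and $\mathbf{r}^{\mathbf{M}\circ f}=\mathbf{r}^{\mathbf{M}}\circ f$ for every relation symbol $\mathbf{r}$ of $\mathcal{J}$.
   Context: On $L$ define $a\rightarrow b=1$ if $a\leq b$ and $a\rightarrow b=b$ otherwise. A language $\mathcal{J}$ is a set of relation symbols with arities; $X$ is a countable set of object variables. Formulas: $\overline{0}$; $\mathbf{r}(x_1,\dots,x_n)$ for $n$-ary $\mathbf{r}$ and $x_i\in X$; $\varphi\wedge\psi$, $\varphi\Rightarrow\psi$; $(\forall x)\varphi$, $(\exists x)\varphi$. An $\mathbf{L}$-structure $\mathbf{M}$ consists of a non-empty universe $M$ and, for each $n$-ary $\mathbf{r}$, a map $\mathbf{r}^{\mathbf{M}}\colon M^n\to L$; it is finite if each $\mathbf{r}^{\mathbf{M}}$ takes a nonzero value on only finitely many arguments. For a valuation $v\colon X\to M$: $\|\overline{0}\|_{\mathbf{M},v}=0$, $\|\mathbf{r}(x_1,\dots,x_n)\|_{\mathbf{M},v}=\mathbf{r}^{\mathbf{M}}(v(x_1),\dots,v(x_n))$,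 $\|\varphi\wedge\psi\|=\inf\{\|\varphi\|,\|\psi\|\}$, $\|\varphi\Rightarrow\psi\|=\|\varphi\|\rightarrow\|\psi\|$, $\|(\forall x)\varphi\|_{\mathbf{M},v}=\inf\{\|\varphi\|_{\mathbf{M},w};\ w=_x v\}$, $\|(\exists x)\varphi\|_{\mathbf{M},v}=\sup\{\|\varphi\|_{\mathbf{M},w};\ w=_x v\}$, where $w=_x v$ means $w$ agrees with $v$ except possibly at $x$. If the free variables of $\varphi$ are $x_1,\dots,x_n$ and $R=\{x_1,\dots,x_n\}$ (used as attributes with values in $M$), $\mathcal{D}_{\mathbf{M},\varphi}$ is the map on tuples $r\colon R\to M$ given by $\mathcal{D}_{\mathbf{M},\varphi}(r)=\|\varphi\|_{\mathbf{M},v}$ for any valuation $v$ with $v(x_i)=r(x_i)$ for all $i$. For a map $g$ into $L$, $g\circ f$ denotes $x\mapsto f(g(x))$. $f$ is an order embedding if $a\leq b\iff f(a)\leq f(b)$. *)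

theory Defs
  imports "HOL-Library.FuncSet"
begin

definition gimp :: "'l::complete_linorder \<Rightarrow> 'l \<Rightarrow> 'l" where
  "gimp a b = (if a \<le> b then top else b)"

type_synonym var = nat

datatype 'r fm =
    FBot
  | FRel 'r "var list"
  | FAnd "'r fm" "'r fm"
  | FImp "'r fm" "'r fm"
  | FAll var "'r fm"
  | FEx var "'r fm"

fun wf_fm :: "('r \<Rightarrow> nat) \<Rightarrow> 'r fm \<Rightarrow> bool" where
  "wf_fm ar FBot = True"
| "wf_fm ar (FRel r xs) = (length xs = ar r)"
| "wf_fm ar (FAnd p q) = (wf_fm ar p \<and> wf_fm ar q)"
| "wf_fm ar (FImp p q) = (wf_fm ar p \<and> wf_fm ar q)"
| "wf_fm ar (FAll x p) = wf_fm ar p"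
| "wf_fm ar (FEx x p) = wf_fm ar p"

fun fv :: "'r fm \<Rightarrow> var set" where
  "fv FBot = {}"
| "fv (FRel r xs) = set xs"
| "fv (FAnd p q) = fv p \<union> fv q"
| "fv (FImp p q) = fv p \<union> fv q"
| "fv (FAll x p) = fv p - {x}"
| "fv (FEx x p) = fv p - {x}"

text \<open>An L-structure: universe M (non-empty) and interpretation I of relation
  symbols as maps from n-tuples (lists of length ar r) over M into L.\<close>
definition is_structure :: "('r \<Rightarrow> nat) \<Rightarrow> 'm set \<Rightarrow> ('r \<Rightarrow> 'm list \<Rightarrow> 'l) \<Rightarrow> bool" where
  "is_structure ar M I \<longleftrightarrow> M \<noteq> {}"

definition finite_structure ::
  "('r \<Rightarrow> nat) \<Rightarrow> 'm set \<Rightarrow> ('r \<Rightarrow> 'm list \<Rightarrow> 'l::complete_linorder) \<Rightarrow> bool" where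
  "finite_structure ar M I \<longleftrightarrow> is_structure ar M I \<and>
     (\<forall>r. finite {xs. xs \<in> lists M \<and> length xs = ar r \<and> I r xs \<noteq> bot})"

fun eval :: "'m set \<Rightarrow> ('r \<Rightarrow> 'm list \<Rightarrow> 'l::complete_linorder) \<Rightarrow> (var \<Rightarrow> 'm) \<Rightarrow> 'r fm \<Rightarrow> 'l" where
  "eval M I v FBot = bot"
| "eval M I v (FRel r xs) = I r (map v xs)"
| "eval M I v (FAnd p q) = inf (eval M I v p) (eval M I v q)"
| "eval M I v (FImp p q) = gimp (eval M I v p) (eval M I v q)"
| "eval M I v (FAll x p) = (INF a\<in>M. eval M I (v(x := a)) p)"
| "eval M I v (FEx x p) = (SUP a\<in>M. eval M I (v(x := a)) p)"

text \<open>The relation D_{M,phi}: tuples are maps r : fv phi -> M (extensional),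
  value is the truth value under any valuation into M extending r.\<close>
definition Drel :: "'m set \<Rightarrow> ('r \<Rightarrow> 'm list \<Rightarrow> 'l::complete_linorder) \<Rightarrow> 'r fm \<Rightarrow> (var \<Rightarrow> 'm) \<Rightarrow> 'l" where
  "Drel M I \<phi> t = eval M I (SOME v. v \<in> UNIV \<rightarrow> M \<and> (\<forall>x\<in>fv \<phi>. v x = t x)) \<phi>"

definition order_embedding :: "('l::order \<Rightarrow> 'l) \<Rightarrow> bool" where
  "order_embedding f \<longleftrightarrow> (\<forall>a b. a \<le> b \<longleftrightarrow> f a \<le> f b)"

end

theory Submission
  imports Defs
begin

text \<open>Over a finite structure a well-formed formula takes only finitely many truth values:
  an atom is either bottom or one of the finitely many nonzero values of its relation, and the
  connectives and quantifiers combine finitely many values. (Well-formedness matters, since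
  finiteness only restricts tuples of the right arity.) Hence every infimum and supremum arising
  from a quantifier is attained, i.e. a minimum or maximum, and a monotone f commutes with it.
  An order embedding fixing top also commutes with the Goedel implication, so f commutes with
  the truth value of every formula, by induction on the formula.\<close>

lemma order_embedding_imp_mono: "order_embedding f \<Longrightarrow> mono f"
  by (simp add: order_embedding_def monoI)

lemma order_embedding_gimp:
  assumes "order_embedding f" and "f top = top"
  shows "f (gimp a b) = gimp (f a) (f b)"
  using assms by (simp add: order_embedding_def gimp_def)

lemma Inf_in_finite:
  fixes A :: "'a::complete_linorder set"
  shows "finite A \<Longrightarrow> A \<noteq> {} \<Longrightarrow> Inf A \<in> A"
  by (simp add: cInf_eq_Min)

lemma Sup_in_finite:
  fixes A :: "'a::complete_linorder set"
  shows "finite A \<Longrightarrow> A \<noteq> {} \<Longrightarrow> Sup A \<in> A"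
  by (simp add: cSup_eq_Max)

lemma mono_Inf_attained:
  fixes f :: "'a::complete_lattice \<Rightarrow> 'b::complete_lattice"
  assumes "mono f" and "Inf A \<in> A"
  shows "f (Inf A) = (INF x\<in>A. f x)"
  by (rule antisym) (use assms mono_Inf in \<open>auto intro: INF_lower\<close>)

lemma mono_Sup_attained:
  fixes f :: "'a::complete_lattice \<Rightarrow> 'b::complete_lattice"
  assumes "mono f" and "Sup A \<in> A"
  shows "f (Sup A) = (SUP x\<in>A. f x)"
  by (rule antisym) (use assms mono_Sup in \<open>auto intro: SUP_upper\<close>)

definition truth_values :: "'m set \<Rightarrow> ('r \<Rightarrow> 'm list \<Rightarrow> 'l::complete_linorder) \<Rightarrow> 'r fm \<Rightarrow> 'l set" where
  "truth_values M I p = (\<lambda>v. eval M I v p) ` (UNIV \<rightarrow> M)"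

lemma finite_truth_values:
  assumes "finite_structure ar M I" and "wf_fm ar p"
  shows "finite (truth_values M I p)"
  using assms(2)
proof (induction p)
  case FBot
  show ?case by (rule finite_subset[of _ "{bot}"]) (auto simp: truth_values_def)
next
  case (FRel r xs)
  let ?nonbot = "{ys. ys \<in> lists M \<and> length ys = ar r \<and> I r ys \<noteq> bot}"
  have "truth_values M I (FRel r xs) \<subseteq> insert bot (I r ` ?nonbot)"
    using FRel.prems by (force simp: truth_values_def Pi_iff)
  moreover have "finite ?nonbot"
    using assms(1) by (simp add: finite_structure_def)
  ultimately show ?case by (meson finite_imageI finite_insert finite_subset)
next
  case (FAnd p q)
  have "truth_values M I (FAnd p q) \<subseteq> (\<lambda>(a, b). inf a b) ` (truth_values M I p \<times> truth_values M I q)"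
    by (auto simp: truth_values_def)
  moreover have "finite (truth_values M I p \<times> truth_values M I q)"
    using FAnd by simp
  ultimately show ?case by (meson finite_imageI finite_subset)
next
  case (FImp p q)
  have "truth_values M I (FImp p q) \<subseteq> (\<lambda>(a, b). gimp a b) ` (truth_values M I p \<times> truth_values M I q)"
    by (auto simp: truth_values_def)
  moreover have "finite (truth_values M I p \<times> truth_values M I q)"
    using FImp by simp
  ultimately show ?case by (meson finite_imageI finite_subset)
next
  case (FAll x p)
  have "truth_values M I (FAll x p) \<subseteq> Inf ` Pow (truth_values M I p)"
    by (auto simp: truth_values_def Pi_iff)
  with FAll show ?case by (simp add: finite_subset)
next
  case (FEx x p)
  have "truth_values M I (FEx x p) \<subseteq> Sup ` Pow (truth_values M I p)"
    by (auto simp: truth_values_def Pi_iff)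
  with FEx show ?case by (simp add: finite_subset)
qed

lemma finite_structure_nonempty: "finite_structure ar M I \<Longrightarrow> M \<noteq> {}"
  by (simp add: finite_structure_def is_structure_def)

lemma finite_quantifier_range:
  assumes "finite_structure ar M I" and "wf_fm ar p" and "v \<in> UNIV \<rightarrow> M"
  shows "finite ((\<lambda>a. eval M I (v(x := a)) p) ` M)"
proof (rule finite_subset)
  show "(\<lambda>a. eval M I (v(x := a)) p) ` M \<subseteq> truth_values M I p"
    using assms(3) by (auto simp: truth_values_def Pi_iff)
  show "finite (truth_values M I p)"
    using assms(1,2) by (rule finite_truth_values)
qed

lemma eval_comp_order_embedding:
  assumes fin: "finite_structure ar M I" and emb: "order_embedding f"
    and "f bot = bot" and "f top = top"
    and "wf_fm ar p" and "v \<in> UNIV \<rightarrow> M"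
  shows "f (eval M I v p) = eval M (\<lambda>r xs. f (I r xs)) v p"
  using assms(5,6)
proof (induction p arbitrary: v)
  case FBot
  then show ?case using \<open>f bot = bot\<close> by simp
next
  case (FRel r xs)
  then show ?case by simp
next
  case (FAnd p q)
  have "f (inf a b) = inf (f a) (f b)" for a b
    using min_of_mono[OF order_embedding_imp_mono[OF emb]] by (simp add: inf_min)
  with FAnd show ?case by simp
next
  case (FImp p q)
  then show ?case using order_embedding_gimp[OF emb \<open>f top = top\<close>] by simp
next
  case (FAll x p)
  let ?e = "\<lambda>a. eval M I (v(x := a)) p"
  have "Inf (?e ` M) \<in> ?e ` M"
  proof (rule Inf_in_finite)
    show "finite (?e ` M)"
      using FAll.prems by (intro finite_quantifier_range[OF fin]) auto
    show "?e ` M \<noteq> {}"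
      using finite_structure_nonempty[OF fin] by simp
  qed
  then have "f (INF a\<in>M. ?e a) = (INF a\<in>M. f (?e a))"
    using mono_Inf_attained[OF order_embedding_imp_mono[OF emb]] by (simp add: image_image)
  also have "\<dots> = (INF a\<in>M. eval M (\<lambda>r xs. f (I r xs)) (v(x := a)) p)"
  proof (rule INF_cong)
    fix a assume "a \<in> M"
    with FAll.prems have "wf_fm ar p" and "v(x := a) \<in> UNIV \<rightarrow> M" by auto
    then show "f (?e a) = eval M (\<lambda>r xs. f (I r xs)) (v(x := a)) p" by (rule FAll.IH)
  qed simp
  finally show ?case by simp
next
  case (FEx x p)
  let ?e = "\<lambda>a. eval M I (v(x := a)) p"
  have "Sup (?e ` M) \<in> ?e ` M"
  proof (rule Sup_in_finite)
    show "finite (?e ` M)"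
      using FEx.prems by (intro finite_quantifier_range[OF fin]) auto
    show "?e ` M \<noteq> {}"
      using finite_structure_nonempty[OF fin] by simp
  qed
  then have "f (SUP a\<in>M. ?e a) = (SUP a\<in>M. f (?e a))"
    using mono_Sup_attained[OF order_embedding_imp_mono[OF emb]] by (simp add: image_image)
  also have "\<dots> = (SUP a\<in>M. eval M (\<lambda>r xs. f (I r xs)) (v(x := a)) p)"
  proof (rule SUP_cong)
    fix a assume "a \<in> M"
    with FEx.prems have "wf_fm ar p" and "v(x := a) \<in> UNIV \<rightarrow> M" by auto
    then show "f (?e a) = eval M (\<lambda>r xs. f (I r xs)) (v(x := a)) p" by (rule FEx.IH)
  qed simp
  finally show ?case by simp
qed

lemma Drel_eq_eval:
  assumes "M \<noteq> {}" and "t \<in> fv \<phi> \<rightarrow> M"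
  obtains v where "v \<in> UNIV \<rightarrow> M" and "\<And>I. Drel M I \<phi> t = eval M I v \<phi>"
proof
  let ?P = "\<lambda>v. v \<in> UNIV \<rightarrow> M \<and> (\<forall>x\<in>fv \<phi>. v x = t x)"
  obtain m where "m \<in> M" using assms(1) by blast
  then have "?P (\<lambda>x. if x \<in> fv \<phi> then t x else m)" using assms(2) by auto
  then have "?P (SOME v. ?P v)" by (rule someI[of ?P])
  then show "(SOME v. ?P v) \<in> UNIV \<rightarrow> M" by (rule conjunct1)
  show "Drel M I \<phi> t = eval M I (SOME v. ?P v) \<phi>" for I by (simp add: Drel_def)
qed

theorem corollary8:
  fixes ar :: "'r \<Rightarrow> nat"
    and M :: "'m set"
    and I :: "'r \<Rightarrow> 'm list \<Rightarrow> 'l::complete_linorder"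
    and \<phi> :: "'r fm"
    and f :: "'l \<Rightarrow> 'l"
  assumes "wf_fm ar \<phi>"
    and "finite_structure ar M I"
    and "order_embedding f"
    and "f bot = bot" and "f top = top"
  shows "\<forall>t \<in> fv \<phi> \<rightarrow>\<^sub>E M.
           f (Drel M I \<phi> t) = Drel M (\<lambda>r xs. f (I r xs)) \<phi> t"
proof
  fix t assume t: "t \<in> fv \<phi> \<rightarrow>\<^sub>E M"
  have "M \<noteq> {}"
    using assms(2) by (rule finite_structure_nonempty)
  moreover have "t \<in> fv \<phi> \<rightarrow> M"
    using t by (simp add: PiE_def)
  ultimately obtain v where v: "v \<in> UNIV \<rightarrow> M"
    and Drel: "\<And>J :: 'r \<Rightarrow> 'm list \<Rightarrow> 'l. Drel M J \<phi> t = eval M J v \<phi>"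
    by (rule Drel_eq_eval) (rule that)
  show "f (Drel M I \<phi> t) = Drel M (\<lambda>r xs. f (I r xs)) \<phi> t"
    using eval_comp_order_embedding[OF assms(2-5,1) v] by (simp only: Drel)
qed

end
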